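(* A binary relation $\succsim$ on $l_\infty$ satisfies Weak order, Continuity, ICRP, Convexity, Monotone continuity, ISU, IOU, Strong monotonicity and IDIS if and only if there exists a unique $\delta\in(0,1)$ such that $$I(x)=(1-\delta)\sum_{t=0}^{\infty}\delta^t x_t$$ is a constant equivalent representing $\succsim$.
   Context: $l_\infty$: real bounded sequences $x=(x_0,x_1,\dots)$ with sup norm; $\theta\in\mathbb R$ also denotes a constant sequence; $x\ge y$ coordinatewise, $x>y$ means $x\ge y$ and $x\ne y$. A constant equivalent representing $\succsim$ is $I:l_\infty\to\mathbb R$ with $x\sim I(x)$ and $x\succsim y\iff I(x)\ge I(y)$. $xAy$ equals $x$ on $A$ and $y$ off $A$; $(E_n)\downarrow\emptyset$ means decreasing with empty intersection. Weak order: complete, transitive. Strong monotonicity: $x\ge y\Rightarrow x\succsim y$ and $x>y\Rightarrow x\succ y$. Continuity: for $x\succsim y\succsim z$ the sets $\{\alpha\in[0,1]:\alpha x+(1-\alpha)z\succsim y\}$, $\{\alpha\in[0,1]:y\succsim\alpha x+(1-\alpha)z\}$ are closed. ICRP: $x\succsim y\Rightarrow x+\theta\succsim y+\theta$. Convexity: $x\succsim\theta,y\succsim\theta\Rightarrow\lambda x+(1-\lambda)y\succsim\theta$ for $\lambda\in[0,1]$. Monotone continuity: if $x\succ\theta$ and $(E_n)\downarrow\emptyset$, then for every $k\in\mathbb R$ there is $n_0$ with $kE_{n_0}x\succ\theta$. ISU: $x\succsim y$, $\alpha\ge 0\Rightarrow\alpha x\succsim\alpha y$. IOU: $x\sim y\Rightarrow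 x+z\sim y+z$ for all $z\in l_\infty$. IDIS: $x+d\succsim x\Rightarrow x+(0,d)\succsim x$, where $(0,d)=(0,d_0,d_1,\dots)$. *)

theory Defs
  imports "HOL-Analysis.Analysis"
begin

type_synonym seq = "nat \<Rightarrow> real"
type_synonym prefrel = "seq \<Rightarrow> seq \<Rightarrow> bool"

definition linf :: "seq set" where
  "linf = {x. bounded (range x)}"

definition cst :: "real \<Rightarrow> seq" where
  "cst \<theta> = (\<lambda>_. \<theta>)"

definition strict :: "prefrel \<Rightarrow> seq \<Rightarrow> seq \<Rightarrow> bool" where
  "strict R x y \<longleftrightarrow> R x y \<and> \<not> R y x"

definition indiff :: "prefrel \<Rightarrow> seq \<Rightarrow> seq \<Rightarrow> bool" where
  "indiff R x y \<longleftrightarrow> R x y \<and> R y x"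

definition glue :: "seq \<Rightarrow> nat set \<Rightarrow> seq \<Rightarrow> seq" where
  "glue x A y = (\<lambda>t. if t \<in> A then x t else y t)"

definition shift0 :: "seq \<Rightarrow> seq" where
  "shift0 d = (\<lambda>t. case t of 0 \<Rightarrow> 0 | Suc s \<Rightarrow> d s)"

definition weak_order :: "prefrel \<Rightarrow> bool" where
  "weak_order R \<longleftrightarrow>
     (\<forall>x\<in>linf. \<forall>y\<in>linf. R x y \<or> R y x) \<and>
     (\<forall>x\<in>linf. \<forall>y\<in>linf. \<forall>z\<in>linf. R x y \<and> R y z \<longrightarrow> R x z)"

definition continuity :: "prefrel \<Rightarrow> bool" where
  "continuity R \<longleftrightarrow>
     (\<forall>x\<in>linf. \<forall>y\<in>linf. \<forall>z\<in>linf. R x y \<and> R y z \<longrightarrow>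
        closed {\<alpha>\<in>{0..1}. R (\<lambda>t. \<alpha> * x t + (1 - \<alpha>) * z t) y} \<and>
        closed {\<alpha>\<in>{0..1}. R y (\<lambda>t. \<alpha> * x t + (1 - \<alpha>) * z t)})"

definition ICRP :: "prefrel \<Rightarrow> bool" where
  "ICRP R \<longleftrightarrow> (\<forall>x\<in>linf. \<forall>y\<in>linf. \<forall>\<theta>::real.
     R x y \<longrightarrow> R (\<lambda>t. x t + \<theta>) (\<lambda>t. y t + \<theta>))"

definition convexity :: "prefrel \<Rightarrow> bool" where
  "convexity R \<longleftrightarrow> (\<forall>x\<in>linf. \<forall>y\<in>linf. \<forall>\<theta>::real. \<forall>lam\<in>{0..1::real}.
     R x (cst \<theta>) \<and> R y (cst \<theta>) \<longrightarrow> R (\<lambda>t. lam * x t + (1 - lam) * y t) (cst \<theta>))"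

definition monotone_continuity :: "prefrel \<Rightarrow> bool" where
  "monotone_continuity R \<longleftrightarrow> (\<forall>x\<in>linf. \<forall>\<theta>::real. \<forall>E :: nat \<Rightarrow> nat set.
     strict R x (cst \<theta>) \<and> (\<forall>n. E (Suc n) \<subseteq> E n) \<and> (\<Inter>n. E n) = {} \<longrightarrow>
     (\<forall>k::real. \<exists>n0. strict R (glue (cst k) (E n0) x) (cst \<theta>)))"

definition ISU :: "prefrel \<Rightarrow> bool" where
  "ISU R \<longleftrightarrow> (\<forall>x\<in>linf. \<forall>y\<in>linf. \<forall>\<alpha>::real.
     R x y \<and> \<alpha> \<ge> 0 \<longrightarrow> R (\<lambda>t. \<alpha> * x t) (\<lambda>t. \<alpha> * y t))"

definition IOU :: "prefrel \<Rightarrow> bool" where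
  "IOU R \<longleftrightarrow> (\<forall>x\<in>linf. \<forall>y\<in>linf. \<forall>z\<in>linf.
     indiff R x y \<longrightarrow> indiff R (\<lambda>t. x t + z t) (\<lambda>t. y t + z t))"

definition strong_monotonicity :: "prefrel \<Rightarrow> bool" where
  "strong_monotonicity R \<longleftrightarrow> (\<forall>x\<in>linf. \<forall>y\<in>linf.
     ((\<forall>t. x t \<ge> y t) \<longrightarrow> R x y) \<and>
     ((\<forall>t. x t \<ge> y t) \<and> x \<noteq> y \<longrightarrow> strict R x y))"

definition IDIS :: "prefrel \<Rightarrow> bool" where
  "IDIS R \<longleftrightarrow> (\<forall>x\<in>linf. \<forall>d\<in>linf.
     R (\<lambda>t. x t + d t) x \<longrightarrow> R (\<lambda>t. x t + shift0 d t) x)"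

definition constant_equivalent :: "prefrel \<Rightarrow> (seq \<Rightarrow> real) \<Rightarrow> bool" where
  "constant_equivalent R I \<longleftrightarrow>
     (\<forall>x\<in>linf. indiff R x (cst (I x))) \<and>
     (\<forall>x\<in>linf. \<forall>y\<in>linf. R x y \<longleftrightarrow> I x \<ge> I y)"

end

theory Submission
  imports Defs
begin

text \<open>
  Discounted utility \<open>D\<^sub>\<delta>\<close> is a positive linear functional on \<open>l\<^sub>\<infinity>\<close> with
  \<open>D\<^sub>\<delta>(0,d) = \<delta> D\<^sub>\<delta>(d)\<close> whose value on the tail indicator \<open>1\<^sub>[\<^sub>N\<^sub>,\<^sub>\<infinity>\<^sub>)\<close> is \<open>\<delta>\<^sup>N\<close>;
  the nine axioms follow from these facts.

  Conversely, weak order, continuity and strong monotonicity give every \<open>x\<close> a certainty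
  equivalent \<open>CE x\<close> representing the preference; IOU and ISU make \<open>CE\<close> linear and strong
  monotonicity makes it positive, with weights \<open>\<mu>\<^sub>t = CE(e\<^sub>t) > 0\<close>. Since
  \<open>CE(\<mu>\<^sub>s e\<^sub>0 - \<mu>\<^sub>0 e\<^sub>s) = 0\<close>, IDIS applied to this vector and its negative gives
  \<open>\<mu>\<^sub>s \<mu>\<^sub>1 = \<mu>\<^sub>0 \<mu>\<^sub>s\<^sub>+\<^sub>1\<close>, so the weights are geometric with ratio \<open>\<delta> = \<mu>\<^sub>1/\<mu>\<^sub>0\<close>.
  Monotone continuity says that the value of the tail indicator tends to \<open>0\<close>;
  this forces \<open>\<delta> < 1\<close> and \<open>\<mu>\<^sub>0 = 1 - \<delta>\<close>, and a positive linear functional with vanishing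
  tails is determined by its weights, so \<open>CE = D\<^sub>\<delta>\<close>. Uniqueness of \<open>\<delta>\<close> is read off at \<open>e\<^sub>0\<close>.
\<close>

lemma linf_iff: "x \<in> linf \<longleftrightarrow> (\<exists>B. \<forall>t. \<bar>x t\<bar> \<le> B)"
  unfolding linf_def bounded_iff by auto

lemma linfI: "(\<And>t. \<bar>x t\<bar> \<le> B) \<Longrightarrow> x \<in> linf"
  using linf_iff by blast

lemma linfE:
  assumes "x \<in> linf"
  obtains B where "B \<ge> 0" "\<And>t. \<bar>x t\<bar> \<le> B"
  by (metis assms linf_iff abs_ge_zero order_trans)

lemma linf_add [simp]: "x \<in> linf \<Longrightarrow> y \<in> linf \<Longrightarrow> (\<lambda>t. x t + y t) \<in> linf"
proof (elim linfE)
  fix A B assume "\<And>t. \<bar>x t\<bar> \<le> A" "\<And>t. \<bar>y t\<bar> \<le> B"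
  then show ?thesis by (intro linfI[of _ "A + B"]) (meson abs_triangle_ineq add_mono order_trans)
qed

lemma linf_scale [simp]: "x \<in> linf \<Longrightarrow> (\<lambda>t. c * x t) \<in> linf"
proof (elim linfE)
  fix B assume "\<And>t. \<bar>x t\<bar> \<le> B"
  then show ?thesis by (intro linfI[of _ "\<bar>c\<bar> * B"]) (simp add: abs_mult mult_left_mono)
qed

lemma linf_uminus [simp]: "x \<in> linf \<Longrightarrow> (\<lambda>t. - x t) \<in> linf"
  using linf_scale[of x "- 1"] by simp

lemma linf_diff [simp]: "x \<in> linf \<Longrightarrow> y \<in> linf \<Longrightarrow> (\<lambda>t. x t - y t) \<in> linf"
  using linf_add[of x "\<lambda>t. - y t"] by simp

lemma linf_const [simp]: "(\<lambda>t. a) \<in> linf"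
  by (rule linfI[of _ "\<bar>a\<bar>"]) simp

lemma linf_cst [simp]: "cst a \<in> linf"
  unfolding cst_def by simp

lemma linf_if [simp]: "x \<in> linf \<Longrightarrow> y \<in> linf \<Longrightarrow> (\<lambda>t. if P t then x t else y t) \<in> linf"
proof (elim linfE)
  fix A B assume "0 \<le> A" "\<And>t. \<bar>x t\<bar> \<le> A" "0 \<le> B" "\<And>t. \<bar>y t\<bar> \<le> B"
  then show ?thesis by (intro linfI[of _ "A + B"]) (smt (verit))
qed

lemma linf_sum [simp]:
  "finite S \<Longrightarrow> (\<And>i. i \<in> S \<Longrightarrow> f i \<in> linf) \<Longrightarrow> (\<lambda>t. \<Sum>i\<in>S. f i t) \<in> linf"
  by (induction S rule: finite_induct) auto

lemma linf_glue [simp]: "x \<in> linf \<Longrightarrow> y \<in> linf \<Longrightarrow> glue x E y \<in> linf"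
  unfolding glue_def by simp

lemma linf_shift0 [simp]: "d \<in> linf \<Longrightarrow> shift0 d \<in> linf"
  by (elim linfE, rule linfI) (auto simp: shift0_def split: nat.split)

definition basis_seq :: "nat \<Rightarrow> seq" where
  "basis_seq i = (\<lambda>t. if t = i then 1 else 0)"

definition tail_seq :: "nat \<Rightarrow> seq" where
  "tail_seq N = (\<lambda>t. if N \<le> t then 1 else 0)"

lemma linf_basis_seq [simp]: "basis_seq i \<in> linf"
  unfolding basis_seq_def by simp

lemma linf_tail_seq [simp]: "tail_seq N \<in> linf"
  unfolding tail_seq_def by simp

lemma finite_support_eq_sum_basis:
  assumes "\<And>t. N \<le> t \<Longrightarrow> x t = 0"
  shows "x = (\<lambda>t. \<Sum>i<N. x i * basis_seq i t)"
proof
  fix t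
  show "x t = (\<Sum>i<N. x i * basis_seq i t)"
  proof (cases "t < N")
    case True
    then have "(\<Sum>i<N. x i * basis_seq i t) = (\<Sum>i\<in>{t}. x i * basis_seq i t)"
      by (intro sum.mono_neutral_right) (auto simp: basis_seq_def)
    then show ?thesis by (simp add: basis_seq_def)
  next
    case False
    then show ?thesis using assms by (simp add: basis_seq_def)
  qed
qed

lemma shift0_basis_seq_diff:
  "shift0 (\<lambda>t. a * basis_seq i t - b * basis_seq j t)
     = (\<lambda>t. a * basis_seq (Suc i) t - b * basis_seq (Suc j) t)"
  by (simp add: shift0_def basis_seq_def fun_eq_iff split: nat.split)

lemma shift0_uminus: "shift0 (\<lambda>t. - d t) = (\<lambda>t. - shift0 d t)"
  by (simp add: shift0_def fun_eq_iff split: nat.split)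

section \<open>Positive linear functionals on bounded sequences\<close>

locale positive_functional =
  fixes F :: "seq \<Rightarrow> real"
  assumes add: "x \<in> linf \<Longrightarrow> y \<in> linf \<Longrightarrow> F (\<lambda>t. x t + y t) = F x + F y"
    and scale: "x \<in> linf \<Longrightarrow> F (\<lambda>t. c * x t) = c * F x"
    and mono: "x \<in> linf \<Longrightarrow> y \<in> linf \<Longrightarrow> (\<And>t. x t \<le> y t) \<Longrightarrow> F x \<le> F y"
begin

lemma zero: "F (\<lambda>t. 0) = 0"
  using scale[of "\<lambda>t. 0" 0] by simp

lemma lincomb:
  "x \<in> linf \<Longrightarrow> y \<in> linf \<Longrightarrow> F (\<lambda>t. a * x t + b * y t) = a * F x + b * F y"
  by (simp only: add linf_scale scale)

lemma lincomb_diff: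
  assumes "x \<in> linf" "y \<in> linf"
  shows "F (\<lambda>t. a * x t - b * y t) = a * F x - b * F y"
  using lincomb[OF assms, of a "- b"] by simp

lemma uminus: "x \<in> linf \<Longrightarrow> F (\<lambda>t. - x t) = - F x"
  using scale[of x "- 1"] by simp

lemma diff: "x \<in> linf \<Longrightarrow> y \<in> linf \<Longrightarrow> F (\<lambda>t. x t - y t) = F x - F y"
  using lincomb_diff[of x y 1 1] by simp

lemma sum:
  "finite S \<Longrightarrow> (\<And>i. i \<in> S \<Longrightarrow> f i \<in> linf)
    \<Longrightarrow> F (\<lambda>t. \<Sum>i\<in>S. f i t) = (\<Sum>i\<in>S. F (f i))"
proof (induction S rule: finite_induct)
  case empty
  then show ?case by (simp add: zero)
next
  case (insert a S)
  then show ?case using add[of "f a" "\<lambda>t. \<Sum>i\<in>S. f i t"] by simp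
qed

lemma finite_support:
  assumes "\<And>t. N \<le> t \<Longrightarrow> x t = 0"
  shows "F x = (\<Sum>i<N. x i * F (basis_seq i))"
proof -
  have "F x = F (\<lambda>t. \<Sum>i<N. x i * basis_seq i t)"
    using finite_support_eq_sum_basis[OF assms] by simp
  also have "\<dots> = (\<Sum>i<N. x i * F (basis_seq i))"
    by (subst sum) (auto simp: scale)
  finally show ?thesis .
qed

lemma tail_seq_eq: "F (tail_seq N) = F (\<lambda>t. 1) - (\<Sum>i<N. F (basis_seq i))"
proof -
  have "F (\<lambda>t. 1) = F (\<lambda>t. tail_seq N t + (if t < N then 1 else 0))"
    by (rule arg_cong[where f = F]) (auto simp: tail_seq_def)
  also have "\<dots> = F (tail_seq N) + (\<Sum>i<N. F (basis_seq i))"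
    by (subst add) (simp_all add: finite_support[of N])
  finally show ?thesis by simp
qed

lemma tail_seq_nonneg: "F (tail_seq N) \<ge> 0"
  using mono[of "\<lambda>t. 0" "tail_seq N"] zero by (simp add: tail_seq_def)

lemma tail_bound:
  assumes "x \<in> linf" "\<And>t. \<bar>x t\<bar> \<le> B"
  shows "\<bar>F (\<lambda>t. if N \<le> t then x t else 0)\<bar> \<le> B * F (tail_seq N)"
proof -
  let ?y = "\<lambda>t. if N \<le> t then x t else 0"
  have "- B \<le> x t" "x t \<le> B" for t using assms(2)[of t] by linarith+
  then have "F ?y \<le> F (\<lambda>t. B * tail_seq N t)" "F (\<lambda>t. (- B) * tail_seq N t) \<le> F ?y"
    using assms(1) by (intro mono; simp add: tail_seq_def)+
  then show ?thesis
    using scale[of "tail_seq N" B] scale[of "tail_seq N" "- B"] by (simp add: abs_le_iff)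
qed

lemma tail_seq_tendsto_zeroI:
  assumes "\<And>\<epsilon>. \<epsilon> > 0 \<Longrightarrow> \<exists>N. F (tail_seq N) < \<epsilon>"
  shows "(\<lambda>N. F (tail_seq N)) \<longlonglongrightarrow> 0"
proof (rule LIMSEQ_I)
  fix \<epsilon> :: real
  assume "\<epsilon> > 0"
  then obtain N where N: "F (tail_seq N) < \<epsilon>" using assms by blast
  show "\<exists>N. \<forall>n\<ge>N. norm (F (tail_seq n) - 0) < \<epsilon>"
  proof (intro exI allI impI)
    fix n assume "N \<le> n"
    then have "F (tail_seq n) \<le> F (tail_seq N)" by (intro mono) (auto simp: tail_seq_def)
    then show "norm (F (tail_seq n) - 0) < \<epsilon>" using N tail_seq_nonneg[of n] by simp
  qed
qed

end

text \<open>Vanishing tails make \<open>F\<close> the limit of its restrictions to finite supports.\<close>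

lemma positive_functional_eqI:
  assumes F: "positive_functional F" and G: "positive_functional G"
    and basis: "\<And>i. F (basis_seq i) = G (basis_seq i)"
    and one: "F (\<lambda>t. 1) = G (\<lambda>t. 1)"
    and tails: "(\<lambda>N. F (tail_seq N)) \<longlonglongrightarrow> 0"
    and x: "x \<in> linf"
  shows "F x = G x"
proof -
  obtain B where B: "\<And>t. \<bar>x t\<bar> \<le> B" using x linfE by blast
  have bound: "\<bar>F x - G x\<bar> \<le> 2 * B * F (tail_seq N)" for N
  proof -
    let ?head = "\<lambda>t. if t < N then x t else 0" and ?tail = "\<lambda>t. if N \<le> t then x t else 0"
    have linf_parts: "?head \<in> linf" "?tail \<in> linf" using x by simp_all
    have split: "(\<lambda>t. ?head t + ?tail t) = x" by auto
    have "F ?head = G ?head"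
      using positive_functional.finite_support[OF F, of N ?head]
        positive_functional.finite_support[OF G, of N ?head] basis by simp
    moreover have "F (tail_seq N) = G (tail_seq N)"
      using positive_functional.tail_seq_eq[OF F] positive_functional.tail_seq_eq[OF G] basis one
      by simp
    moreover note positive_functional.add[OF F linf_parts, unfolded split]
      positive_functional.add[OF G linf_parts, unfolded split]
    ultimately show ?thesis
      using positive_functional.tail_bound[OF F x B, of N]
        positive_functional.tail_bound[OF G x B, of N]
      by (simp add: abs_le_iff)
  qed
  have "(\<lambda>N. 2 * B * F (tail_seq N)) \<longlonglongrightarrow> 0"
    using tendsto_mult[OF tendsto_const tails, of "2 * B"] by simp
  then have "\<bar>F x - G x\<bar> \<le> 0"
    by (rule LIMSEQ_le_const) (use bound in blast)
  then show ?thesis by simp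
qed

section \<open>Discounted utility\<close>

definition discounted :: "real \<Rightarrow> seq \<Rightarrow> real" where
  "discounted \<delta> x = (1 - \<delta>) * (\<Sum>t. \<delta> ^ t * x t)"

context
  fixes \<delta> :: real
  assumes \<delta>: "0 < \<delta>" "\<delta> < 1"
begin

lemma summable_discounted: "x \<in> linf \<Longrightarrow> summable (\<lambda>t. \<delta> ^ t * x t)"
proof (elim linfE, rule summable_comparison_test)
  fix B assume "\<And>t. \<bar>x t\<bar> \<le> B"
  then show "\<exists>N. \<forall>n\<ge>N. norm (\<delta> ^ n * x n) \<le> B * \<delta> ^ n"
    using \<delta> by (auto simp: abs_mult mult.commute intro!: mult_left_mono)
  show "summable (\<lambda>t. B * \<delta> ^ t)"
    using \<delta> by (intro summable_mult summable_geometric) simp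
qed

lemma positive_functional_discounted: "positive_functional (discounted \<delta>)"
proof
  fix x y assume x: "x \<in> linf" and y: "y \<in> linf"
  show "discounted \<delta> (\<lambda>t. x t + y t) = discounted \<delta> x + discounted \<delta> y"
    unfolding discounted_def distrib_left suminf_add[OF summable_discounted[OF x]
        summable_discounted[OF y], symmetric] ..
  assume "\<And>t. x t \<le> y t"
  then have "(\<Sum>t. \<delta> ^ t * x t) \<le> (\<Sum>t. \<delta> ^ t * y t)"
    using \<delta> summable_discounted[OF x] summable_discounted[OF y]
    by (intro suminf_le) (auto intro: mult_left_mono)
  then show "discounted \<delta> x \<le> discounted \<delta> y"
    unfolding discounted_def using \<delta> by (simp add: mult_left_mono)
next
  fix x c assume "x \<in> linf"
  then show "discounted \<delta> (\<lambda>t. c * x t) = c * discounted \<delta> x"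
    unfolding discounted_def using suminf_mult[OF summable_discounted, of x c]
    by (simp add: algebra_simps)
qed

interpretation D: positive_functional "discounted \<delta>"
  by (rule positive_functional_discounted)

lemma discounted_const [simp]: "discounted \<delta> (\<lambda>t. a) = a"
proof -
  have "(\<lambda>t. \<delta> ^ t * a) sums (1 / (1 - \<delta>) * a)"
    using \<delta> by (intro sums_mult2 geometric_sums) simp
  then show ?thesis unfolding discounted_def using \<delta> by (simp add: sums_iff)
qed

lemma discounted_cst [simp]: "discounted \<delta> (cst a) = a"
  unfolding cst_def by simp

lemma discounted_basis_seq: "discounted \<delta> (basis_seq i) = (1 - \<delta>) * \<delta> ^ i"
proof -
  have "(\<Sum>t. \<delta> ^ t * basis_seq i t) = (\<Sum>t\<in>{i}. \<delta> ^ t * basis_seq i t)"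
    by (rule suminf_finite) (auto simp: basis_seq_def)
  then show ?thesis unfolding discounted_def by (simp add: basis_seq_def)
qed

lemma discounted_tail_seq: "discounted \<delta> (tail_seq N) = \<delta> ^ N"
proof -
  have "discounted \<delta> (tail_seq N) = 1 - (1 - \<delta>) * (\<Sum>i<N. \<delta> ^ i)"
    by (simp add: D.tail_seq_eq discounted_basis_seq sum_distrib_left)
  also have "\<dots> = \<delta> ^ N"
    using \<delta> by (simp add: sum_gp_strict)
  finally show ?thesis .
qed

lemma discounted_shift0: "d \<in> linf \<Longrightarrow> discounted \<delta> (shift0 d) = \<delta> * discounted \<delta> d"
  unfolding discounted_def
  using suminf_split_head[OF summable_discounted[OF linf_shift0]]
    suminf_mult[OF summable_discounted, of d \<delta>]
  by (simp add: shift0_def mult.assoc)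

section \<open>Necessity\<close>

context
  fixes R :: prefrel
  assumes represents: "constant_equivalent R (discounted \<delta>)"
begin

lemma R_iff_discounted:
  "x \<in> linf \<Longrightarrow> y \<in> linf \<Longrightarrow> R x y \<longleftrightarrow> discounted \<delta> y \<le> discounted \<delta> x"
  using represents unfolding constant_equivalent_def by blast

lemma discounted_weak_order: "weak_order R"
  unfolding weak_order_def using R_iff_discounted by (meson linear order_trans)

lemma discounted_continuity: "continuity R"
  unfolding continuity_def
proof (intro ballI impI conjI)
  fix x y z assume xyz: "x \<in> linf" "y \<in> linf" "z \<in> linf"
  let ?v = "\<lambda>\<alpha>. \<alpha> * discounted \<delta> x + (1 - \<alpha>) * discounted \<delta> z"
  have mix: "discounted \<delta> (\<lambda>t. \<alpha> * x t + (1 - \<alpha>) * z t) = ?v \<alpha>" for \<alpha>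
    using xyz(1,3) by (rule D.lincomb)
  have "{\<alpha>\<in>{0..1}. R (\<lambda>t. \<alpha> * x t + (1 - \<alpha>) * z t) y} = {0..1} \<inter> {\<alpha>. discounted \<delta> y \<le> ?v \<alpha>}"
    using R_iff_discounted mix xyz by auto
  then show "closed {\<alpha>\<in>{0..1}. R (\<lambda>t. \<alpha> * x t + (1 - \<alpha>) * z t) y}"
    by (simp add: closed_Int closed_Collect_le continuous_intros)
  have "{\<alpha>\<in>{0..1}. R y (\<lambda>t. \<alpha> * x t + (1 - \<alpha>) * z t)} = {0..1} \<inter> {\<alpha>. ?v \<alpha> \<le> discounted \<delta> y}"
    using R_iff_discounted mix xyz by auto
  then show "closed {\<alpha>\<in>{0..1}. R y (\<lambda>t. \<alpha> * x t + (1 - \<alpha>) * z t)}"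
    by (simp add: closed_Int closed_Collect_le continuous_intros)
qed

lemma discounted_ICRP: "ICRP R"
  unfolding ICRP_def using R_iff_discounted by (simp add: D.add)

lemma discounted_convexity: "convexity R"
  unfolding convexity_def
proof (intro ballI allI impI)
  fix x y \<theta> lam assume xy: "x \<in> linf" "y \<in> linf" and lam: "lam \<in> {0..1::real}"
    and "R x (cst \<theta>) \<and> R y (cst \<theta>)"
  then have "lam * \<theta> \<le> lam * discounted \<delta> x" "(1 - lam) * \<theta> \<le> (1 - lam) * discounted \<delta> y"
    using R_iff_discounted by (auto intro: mult_left_mono)
  then have "\<theta> \<le> lam * discounted \<delta> x + (1 - lam) * discounted \<delta> y"
    by (simp add: algebra_simps)
  then show "R (\<lambda>t. lam * x t + (1 - lam) * y t) (cst \<theta>)"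
    using xy by (simp add: R_iff_discounted D.lincomb)
qed

lemma discounted_monotone_continuity: "monotone_continuity R"
  unfolding monotone_continuity_def
proof (intro ballI allI impI)
  fix x \<theta> k and E :: "nat \<Rightarrow> nat set"
  assume x: "x \<in> linf"
    and h: "strict R x (cst \<theta>) \<and> (\<forall>n. E (Suc n) \<subseteq> E n) \<and> (\<Inter>n. E n) = {}"
  have gap: "\<theta> < discounted \<delta> x" using h x R_iff_discounted unfolding strict_def by auto
  obtain B where B: "B \<ge> 0" "\<And>t. \<bar>x t\<bar> \<le> B" using x by (metis linfE)
  obtain N where N: "\<delta> ^ N < (discounted \<delta> x - \<theta>) / (\<bar>k\<bar> + B + 1)"
    using real_arch_pow_inv[of "(discounted \<delta> x - \<theta>) / (\<bar>k\<bar> + B + 1)" \<delta>] gap \<delta> B by auto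
  \<comment> \<open>The dates below \<open>N\<close> have all left \<open>E n\<^sub>0\<close> for \<open>n\<^sub>0\<close> the sum of their exit times.\<close>
  obtain f where f: "\<And>t. t < N \<Longrightarrow> t \<notin> E (f t)" using h by (metis INT_I empty_iff)
  define n0 where "n0 = (\<Sum>t<N. f t)"
  have "decseq E" using h by (intro decseq_SucI) auto
  then have early: "t \<notin> E n0" if "t < N" for t
    using f[OF that] member_le_sum[of t "{..<N}" f] that unfolding n0_def decseq_def by blast
  let ?g = "glue (cst k) (E n0) x"
  let ?h = "\<lambda>t. if N \<le> t then ?g t - x t else 0"
  have split: "(\<lambda>t. x t + ?h t) = ?g" using early by (auto simp: glue_def)
  have g: "discounted \<delta> ?g = discounted \<delta> x + discounted \<delta> ?h"
    using D.add[of x ?h, unfolded split] x by simp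
  have "\<bar>?g t - x t\<bar> \<le> \<bar>k\<bar> + B" for t using B(2)[of t] by (auto simp: glue_def cst_def)
  then have "\<bar>discounted \<delta> ?h\<bar> \<le> (\<bar>k\<bar> + B) * \<delta> ^ N"
    using D.tail_bound[of "\<lambda>t. ?g t - x t"] x by (simp add: discounted_tail_seq)
  also have "\<dots> < discounted \<delta> x - \<theta>"
    using N B \<delta> by (simp add: field_simps) (smt (verit) mult_nonneg_nonneg zero_le_power)
  finally have "strict R ?g (cst \<theta>)"
    using g x R_iff_discounted unfolding strict_def by auto
  then show "\<exists>n0. strict R (glue (cst k) (E n0) x) (cst \<theta>)" by blast
qed

lemma discounted_ISU: "ISU R"
  unfolding ISU_def using R_iff_discounted by (auto simp: D.scale intro: mult_left_mono)

lemma discounted_IOU: "IOU R"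
  unfolding IOU_def indiff_def using R_iff_discounted by (auto simp: D.add)

lemma discounted_strong_monotonicity: "strong_monotonicity R"
  unfolding strong_monotonicity_def
proof (intro ballI conjI impI)
  fix x y assume xy: "x \<in> linf" "y \<in> linf"
  show "R x y" if "\<forall>t. y t \<le> x t" using that R_iff_discounted xy D.mono by auto
  assume h: "(\<forall>t. y t \<le> x t) \<and> x \<noteq> y"
  then obtain t where gap: "x t - y t > 0" by (metis diff_gt_0_iff_gt ext order_less_le)
  have "discounted \<delta> (\<lambda>s. (x t - y t) * basis_seq t s) \<le> discounted \<delta> (\<lambda>s. x s - y s)"
    using xy h by (intro D.mono) (auto simp: basis_seq_def)
  then have "(x t - y t) * ((1 - \<delta>) * \<delta> ^ t) \<le> discounted \<delta> x - discounted \<delta> y"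
    using xy by (simp add: D.scale D.diff discounted_basis_seq)
  moreover have "(x t - y t) * ((1 - \<delta>) * \<delta> ^ t) > 0" using gap \<delta> by simp
  ultimately show "strict R x y" unfolding strict_def using R_iff_discounted xy by auto
qed

lemma discounted_IDIS: "IDIS R"
  unfolding IDIS_def
  using R_iff_discounted \<delta> by (simp add: D.add discounted_shift0)

end

end

lemma discounted_unique:
  assumes "0 < a" "a < 1" "0 < b" "b < 1"
    and "constant_equivalent R (discounted a)" "constant_equivalent R (discounted b)"
  shows "a = b"
proof -
  have "discounted b x = discounted a x" if "x \<in> linf" for x
    using assms R_iff_discounted[of a R x "cst (discounted a x)"] R_iff_discounted[of b R x "cst (discounted a x)"]
      R_iff_discounted[of a R "cst (discounted a x)" x] R_iff_discounted[of b R "cst (discounted a x)" x] that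
    by auto
  from this[of "basis_seq 0"] show ?thesis
    using assms discounted_basis_seq[of a 0] discounted_basis_seq[of b 0] by simp
qed

section \<open>Sufficiency\<close>

locale preference =
  fixes R :: prefrel
  assumes wo: "weak_order R" and cont: "continuity R" and mc: "monotone_continuity R"
    and isu: "ISU R" and iou: "IOU R" and sm: "strong_monotonicity R" and idis: "IDIS R"
begin

lemma total: "x \<in> linf \<Longrightarrow> y \<in> linf \<Longrightarrow> R x y \<or> R y x"
  using wo unfolding weak_order_def by blast

lemma trans: "x \<in> linf \<Longrightarrow> y \<in> linf \<Longrightarrow> z \<in> linf \<Longrightarrow> R x y \<Longrightarrow> R y z \<Longrightarrow> R x z"
  using wo unfolding weak_order_def by blast

lemma monoR: "x \<in> linf \<Longrightarrow> y \<in> linf \<Longrightarrow> (\<And>t. y t \<le> x t) \<Longrightarrow> R x y"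
  using sm unfolding strong_monotonicity_def by blast

lemma strict_monoR:
  "x \<in> linf \<Longrightarrow> y \<in> linf \<Longrightarrow> (\<And>t. y t \<le> x t) \<Longrightarrow> x \<noteq> y \<Longrightarrow> strict R x y"
  using sm unfolding strong_monotonicity_def by blast

lemma R_cst_iff: "R (cst a) (cst b) \<longleftrightarrow> b \<le> a"
proof
  assume "R (cst a) (cst b)"
  moreover have "strict R (cst b) (cst a)" if "a < b"
    using that by (intro strict_monoR) (auto simp: cst_def fun_eq_iff)
  ultimately show "b \<le> a" unfolding strict_def by force
qed (intro monoR, auto simp: cst_def)

lemma ex_certainty_equivalent:
  assumes x: "x \<in> linf"
  shows "\<exists>\<theta>. indiff R x (cst \<theta>)"
proof -
  obtain B where B: "\<And>t. \<bar>x t\<bar> \<le> B" using x by (metis linfE)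
  let ?m = "\<lambda>\<alpha>. (\<lambda>t. \<alpha> * cst B t + (1 - \<alpha>) * cst (- B) t)"
  have m: "?m \<alpha> = cst (\<alpha> * B + (1 - \<alpha>) * (- B))" for \<alpha> by (simp add: cst_def)
  have "- B \<le> x t" "x t \<le> B" for t using B[of t] by linarith+
  then have top: "R (cst B) x" and bot: "R x (cst (- B))"
    using x by (auto intro!: monoR simp: cst_def)
  let ?P = "{\<alpha>\<in>{0..1}. R (?m \<alpha>) x}" and ?Q = "{\<alpha>\<in>{0..1}. R x (?m \<alpha>)}"
  have "closed ?P" "closed ?Q"
    using cont top bot x unfolding continuity_def by (meson linf_cst)+
  moreover have "{0..1} \<subseteq> ?P \<union> ?Q" using total[OF linf_cst x] m by auto
  moreover have "1 \<in> ?P" "0 \<in> ?Q" using top bot m[of 1] m[of 0] by auto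
  ultimately have "?P \<inter> ?Q \<inter> {0..1::real} \<noteq> {}"
    using connected_closedD[OF connected_Icc[of 0 "1::real"]] by blast
  then show ?thesis unfolding indiff_def m by blast
qed

definition CE :: "seq \<Rightarrow> real" where
  "CE x = (SOME \<theta>. indiff R x (cst \<theta>))"

lemma indiff_CE: "x \<in> linf \<Longrightarrow> indiff R x (cst (CE x))"
  unfolding CE_def using ex_certainty_equivalent by (rule someI_ex)

lemma R_iff_CE:
  assumes "x \<in> linf" "y \<in> linf"
  shows "R x y \<longleftrightarrow> CE y \<le> CE x"
proof -
  have "R x y \<longleftrightarrow> R (cst (CE x)) (cst (CE y))"
    using indiff_CE[OF assms(1)] indiff_CE[OF assms(2)] assms
    unfolding indiff_def by (meson linf_cst trans)
  then show ?thesis by (simp add: R_cst_iff)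
qed

lemma CE_eqI:
  assumes "x \<in> linf" "indiff R x (cst \<theta>)"
  shows "CE x = \<theta>"
proof -
  have "R (cst \<theta>) (cst (CE x))" "R (cst (CE x)) (cst \<theta>)"
    using indiff_CE[OF assms(1)] assms unfolding indiff_def by (meson linf_cst trans)+
  then show ?thesis by (simp add: R_cst_iff)
qed

lemma CE_cst [simp]: "CE (cst \<theta>) = \<theta>"
  by (rule CE_eqI) (auto simp: indiff_def R_cst_iff)

lemma CE_const [simp]: "CE (\<lambda>t. \<theta>) = \<theta>"
  using CE_cst unfolding cst_def .

lemma indiff_trans:
  "x \<in> linf \<Longrightarrow> y \<in> linf \<Longrightarrow> z \<in> linf \<Longrightarrow> indiff R x y \<Longrightarrow> indiff R y z
    \<Longrightarrow> indiff R x z"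
  unfolding indiff_def using trans by blast

lemma indiff_add:
  "x \<in> linf \<Longrightarrow> y \<in> linf \<Longrightarrow> z \<in> linf \<Longrightarrow> indiff R x y
    \<Longrightarrow> indiff R (\<lambda>t. x t + z t) (\<lambda>t. y t + z t)"
  using iou unfolding IOU_def by blast

lemma CE_add:
  assumes x: "x \<in> linf" and z: "z \<in> linf"
  shows "CE (\<lambda>t. x t + z t) = CE x + CE z"
proof (rule CE_eqI)
  have "indiff R (\<lambda>t. x t + z t) (\<lambda>t. cst (CE x) t + z t)"
    using indiff_add[OF x linf_cst z indiff_CE[OF x]] .
  moreover have "indiff R (\<lambda>t. z t + cst (CE x) t) (\<lambda>t. cst (CE z) t + cst (CE x) t)"
    using indiff_add[OF z linf_cst linf_cst indiff_CE[OF z]] .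
  then have "indiff R (\<lambda>t. cst (CE x) t + z t) (cst (CE x + CE z))"
    by (simp add: cst_def add.commute)
  ultimately show "indiff R (\<lambda>t. x t + z t) (cst (CE x + CE z))"
    by (rule indiff_trans[rotated 3]) (use x z in simp_all)
qed (use x z in simp)

lemma indiff_scale:
  "x \<in> linf \<Longrightarrow> y \<in> linf \<Longrightarrow> \<alpha> \<ge> 0 \<Longrightarrow> indiff R x y
    \<Longrightarrow> indiff R (\<lambda>t. \<alpha> * x t) (\<lambda>t. \<alpha> * y t)"
  using isu unfolding ISU_def indiff_def by blast

lemma CE_scale_nonneg:
  assumes x: "x \<in> linf" and "\<alpha> \<ge> 0"
  shows "CE (\<lambda>t. \<alpha> * x t) = \<alpha> * CE x"
proof (rule CE_eqI)
  have "indiff R (\<lambda>t. \<alpha> * x t) (\<lambda>t. \<alpha> * cst (CE x) t)"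
    using indiff_scale[OF x linf_cst assms(2) indiff_CE[OF x]] .
  then show "indiff R (\<lambda>t. \<alpha> * x t) (cst (\<alpha> * CE x))" by (simp add: cst_def)
qed (use x in simp)

lemma CE_scale:
  assumes x: "x \<in> linf"
  shows "CE (\<lambda>t. c * x t) = c * CE x"
proof (cases "c \<ge> 0")
  case True
  then show ?thesis using CE_scale_nonneg[OF x] by blast
next
  case False
  have "CE (\<lambda>t. c * x t) + CE (\<lambda>t. (- c) * x t) = CE (\<lambda>t. c * x t + (- c) * x t)"
    by (rule CE_add[symmetric]) (use x in simp_all)
  also have "\<dots> = 0" by simp
  finally show ?thesis using CE_scale_nonneg[OF x, of "- c"] False by simp
qed

sublocale CE: positive_functional CE
  by standard (use CE_add CE_scale R_iff_CE monoR in blast)+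

definition weight :: "nat \<Rightarrow> real" where
  "weight i = CE (basis_seq i)"

lemma weight_pos: "weight i > 0"
proof -
  have "strict R (basis_seq i) (cst 0)"
    by (intro strict_monoR) (auto simp: basis_seq_def cst_def fun_eq_iff)
  then show ?thesis
    using R_iff_CE[of "cst 0" "basis_seq i"] unfolding weight_def strict_def by simp
qed

lemma CE_shift0_eq_zero:
  assumes d: "d \<in> linf" and "CE d = 0"
  shows "CE (shift0 d) = 0"
proof -
  have shift_nonneg: "CE (shift0 e) \<ge> 0" if "e \<in> linf" "CE e \<ge> 0" for e
  proof -
    have "R (\<lambda>t. cst 0 t + e t) (cst 0)" using R_iff_CE that by (simp add: cst_def)
    then have "R (\<lambda>t. cst 0 t + shift0 e t) (cst 0)" using idis that unfolding IDIS_def by simp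
    then show ?thesis using R_iff_CE that by (simp add: cst_def)
  qed
  show ?thesis
    using shift_nonneg[OF d] shift_nonneg[of "\<lambda>t. - d t"] assms
    by (simp add: shift0_uminus CE.uminus)
qed

lemma weight_Suc: "weight (Suc s) * weight 0 = weight s * weight 1"
proof -
  let ?d = "\<lambda>t. weight s * basis_seq 0 t - weight 0 * basis_seq s t"
  have "CE ?d = 0" by (simp add: CE.lincomb_diff weight_def)
  then have "CE (shift0 ?d) = 0" by (simp add: CE_shift0_eq_zero)
  then show ?thesis by (simp add: shift0_basis_seq_diff CE.lincomb_diff weight_def)
qed

definition ratio :: real where
  "ratio = weight 1 / weight 0"

lemma ratio_pos: "ratio > 0"
  unfolding ratio_def using weight_pos by simp

lemma weight_geometric: "weight s = weight 0 * ratio ^ s"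
proof (induction s)
  case (Suc s)
  have "weight (Suc s) = weight s * ratio"
    using weight_Suc[of s] weight_pos[of 0] by (simp add: ratio_def field_simps)
  then show ?case using Suc.IH by simp
qed simp

lemma CE_tail_seq_tendsto_zero: "(\<lambda>N. CE (tail_seq N)) \<longlonglongrightarrow> 0"
proof (rule CE.tail_seq_tendsto_zeroI)
  fix \<epsilon> :: real
  assume "\<epsilon> > 0"
  then have "strict R (cst 0) (cst (- \<epsilon>))" unfolding strict_def by (simp add: R_cst_iff)
  moreover have "\<forall>n. {Suc n..} \<subseteq> {n..}" "(\<Inter>n. {n..}) = ({} :: nat set)"
    by (auto simp: set_eq_iff) (meson Suc_n_not_le_n)
  ultimately obtain n0 where "strict R (glue (cst (- 1)) {n0..} (cst 0)) (cst (- \<epsilon>))"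
    using mc[unfolded monotone_continuity_def, rule_format, OF linf_cst, of 0 "- \<epsilon>" "\<lambda>n. {n..}"]
    by blast
  moreover have "glue (cst (- 1)) {n0..} (cst 0) = (\<lambda>t. (- 1) * tail_seq n0 t)"
    by (auto simp: glue_def cst_def tail_seq_def)
  ultimately have "- \<epsilon> < CE (\<lambda>t. (- 1) * tail_seq n0 t)"
    using R_iff_CE unfolding strict_def by (metis CE_cst linf_cst linf_scale linf_tail_seq not_le)
  then show "\<exists>N. CE (tail_seq N) < \<epsilon>" by (auto simp: CE.uminus)
qed

lemma CE_tail_seq: "CE (tail_seq N) = 1 - weight 0 * (\<Sum>i<N. ratio ^ i)"
proof -
  have "(\<Sum>i<N. weight i) = weight 0 * (\<Sum>i<N. ratio ^ i)"
    unfolding sum_distrib_left by (rule sum.cong[OF refl weight_geometric])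
  then show ?thesis by (simp add: CE.tail_seq_eq weight_def)
qed

lemma ratio_less_one: "ratio < 1"
proof (rule ccontr)
  assume "\<not> ratio < 1"
  then have sum_ge: "real N \<le> (\<Sum>i<N. ratio ^ i)" for N
    using sum_mono[of "{..<N}" "\<lambda>_. 1" "\<lambda>i. ratio ^ i"] by (simp add: one_le_power)
  obtain N where "1 / weight 0 < real N" using reals_Archimedean2 by blast
  then have "1 < weight 0 * real N" using weight_pos[of 0] by (simp add: field_simps)
  also have "\<dots> \<le> weight 0 * (\<Sum>i<N. ratio ^ i)"
    using sum_ge weight_pos[of 0] by (simp add: mult_left_mono)
  finally show False using CE.tail_seq_nonneg[of N] CE_tail_seq[of N] by simp
qed

lemma weight_0: "weight 0 = 1 - ratio"
proof -
  have "CE (tail_seq N) = 1 - weight 0 / (1 - ratio) * (1 - ratio ^ N)" for N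
    using ratio_less_one by (simp add: CE_tail_seq sum_gp_strict)
  then have "(\<lambda>N. CE (tail_seq N)) \<longlonglongrightarrow> 1 - weight 0 / (1 - ratio) * (1 - 0)"
    using ratio_pos ratio_less_one
    by (simp only:) (intro tendsto_intros LIMSEQ_power_zero; simp)
  then have "1 - weight 0 / (1 - ratio) = 0"
    using CE_tail_seq_tendsto_zero LIMSEQ_unique by fastforce
  then show ?thesis using ratio_less_one by (simp add: field_simps)
qed

lemma CE_eq_discounted: "x \<in> linf \<Longrightarrow> CE x = discounted ratio x"
proof (rule positive_functional_eqI[OF CE.positive_functional_axioms
      positive_functional_discounted[OF ratio_pos ratio_less_one]])
  show "CE (basis_seq i) = discounted ratio (basis_seq i)" for i
    using weight_geometric[of i] ratio_pos ratio_less_one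
    unfolding weight_0 by (simp add: discounted_basis_seq weight_def)
  show "CE (\<lambda>t. 1) = discounted ratio (\<lambda>t. 1)"
    using ratio_pos ratio_less_one by simp
qed (use CE_tail_seq_tendsto_zero in auto)

lemma ex_discounted_representation:
  "\<exists>\<delta>. 0 < \<delta> \<and> \<delta> < 1 \<and> constant_equivalent R (discounted \<delta>)"
  using ratio_pos ratio_less_one indiff_CE R_iff_CE CE_eq_discounted
  unfolding constant_equivalent_def by auto

end

lemma discounted_eq_lambda: "discounted \<delta> = (\<lambda>x. (1 - \<delta>) * (\<Sum>t. \<delta> ^ t * x t))"
  by (simp add: discounted_def fun_eq_iff)

theorem proposition3:
  fixes R :: "(nat \<Rightarrow> real) \<Rightarrow> (nat \<Rightarrow> real) \<Rightarrow> bool"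
  shows "(weak_order R \<and> continuity R \<and> ICRP R \<and> convexity R \<and>
          monotone_continuity R \<and> ISU R \<and> IOU R \<and> strong_monotonicity R \<and> IDIS R)
     \<longleftrightarrow> (\<exists>!\<delta>::real. 0 < \<delta> \<and> \<delta> < 1 \<and>
            constant_equivalent R (\<lambda>x. (1 - \<delta>) * (\<Sum>t. \<delta> ^ t * x t)))"
  unfolding discounted_eq_lambda[symmetric]
proof
  assume "weak_order R \<and> continuity R \<and> ICRP R \<and> convexity R \<and>
          monotone_continuity R \<and> ISU R \<and> IOU R \<and> strong_monotonicity R \<and> IDIS R"
  then interpret preference R by unfold_locales blast+
  show "\<exists>!\<delta>. 0 < \<delta> \<and> \<delta> < 1 \<and> constant_equivalent R (discounted \<delta>)"
    using ex_discounted_representation discounted_unique by blast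
next
  assume "\<exists>!\<delta>. 0 < \<delta> \<and> \<delta> < 1 \<and> constant_equivalent R (discounted \<delta>)"
  then obtain \<delta> where "0 < \<delta>" "\<delta> < 1" "constant_equivalent R (discounted \<delta>)" by blast
  then show "weak_order R \<and> continuity R \<and> ICRP R \<and> convexity R \<and>
          monotone_continuity R \<and> ISU R \<and> IOU R \<and> strong_monotonicity R \<and> IDIS R"
    by (simp add: discounted_weak_order discounted_continuity discounted_ICRP
        discounted_convexity discounted_monotone_continuity discounted_ISU discounted_IOU
        discounted_strong_monotonicity discounted_IDIS)
qed

end
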